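(* For every natural number $\alpha<\omega$, \[ f_{\omega^{\omega^\alpha}}\in d_{1/2}^{\omega^{1+\alpha}}\Big(B_{\ell_1([0,\omega^{\omega^\alpha}])}\Big). \]
   Context: Ordinal arithmetic throughout. For an ordinal $\gamma$, $[0,\gamma]$ has the order topology and $\ell_1([0,\gamma])$ is identified with $C([0,\gamma])^*$ (weak$^*$-topology accordingly). For $\beta\le\gamma$, $f_\beta\in\ell_1([0,\gamma])$ is the indicator of $\{\beta\}$. For a weak$^*$-compact $K$ in a dual $X^*$: $H(x,t)=\{x^*: x^*(x)>t\}$; a weak$^*$-slice of $K$ is a nonempty $H(x,t)\cap K$; $d_\varepsilon K$ is $K$ minus the union of all weak$^*$-slices of $K$ of norm diameter $<\varepsilon$; $d_\varepsilon^0K=K$, $d_\varepsilon^{\beta+1}K=d_\varepsilon(d_\varepsilon^\beta K)$, $d_\varepsilon^\beta K=\bigcap_{\mu<\beta}d_\varepsilon^\mu K$ for limit $\beta$. *)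

theory Defs
  imports "HOL-Analysis.Analysis" "HOL-Library.Multiset_Order"
begin

text \<open>If the linearly (well-)ordered type 'a represents an initial segment of
ordinals of order type theta, then 'a multiset with the multiset
(Dershowitz--Manna) order represents the ordinals below omega^theta via
Cantor normal form: M corresponds to the sum of omega^b for b in M, taken in
non-increasing order. Thus nat (= omega) gives nat multiset (ordinals below
omega^omega) and nat multiset multiset (ordinals below omega^(omega^omega)).\<close>

definition opow :: "'a \<Rightarrow> 'a multiset" where
  "opow b = {#b#}"

instantiation multiset :: (linorder) topological_space
begin
definition open_multiset :: "'a multiset set \<Rightarrow> bool" where
  "open_multiset = generate_topology (range lessThan \<union> range greaterThan)"
instance
proof
  show "open (UNIV :: 'a multiset set)"
    unfolding open_multiset_def by (rule generate_topology.UNIV)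
  show "open S \<Longrightarrow> open T \<Longrightarrow> open (S \<inter> T)" for S T :: "'a multiset set"
    unfolding open_multiset_def by (rule generate_topology.Int)
  show "\<forall>S\<in>K. open S \<Longrightarrow> open (\<Union> K)" for K :: "'a multiset set set"
    unfolding open_multiset_def by (rule generate_topology.UN) auto
qed
end

instance multiset :: (linorder) linorder_topology
  by standard (simp add: open_multiset_def)

text \<open>Continuous real functions on [0,gamma] = {..gamma} (subspace of the order
topology, which equals the order topology of the interval).\<close>
definition Cspace :: "'a::linorder_topology \<Rightarrow> ('a \<Rightarrow> real) set" where
  "Cspace \<gamma> = {f. continuous_on {..\<gamma>} f}"

definition ell1 :: "'a::linorder \<Rightarrow> ('a \<Rightarrow> real) set" where
  "ell1 \<gamma> = {\<mu>. (\<forall>x. \<not> x \<le> \<gamma> \<longrightarrow> \<mu> x = 0) \<and> (\<lambda>x. \<bar>\<mu> x\<bar>) summable_on {..\<gamma>}}"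

definition l1norm :: "'a::linorder \<Rightarrow> ('a \<Rightarrow> real) \<Rightarrow> real" where
  "l1norm \<gamma> \<mu> = (\<Sum>\<^sub>\<infinity>x\<in>{..\<gamma>}. \<bar>\<mu> x\<bar>)"

definition dpair :: "'a::linorder \<Rightarrow> ('a \<Rightarrow> real) \<Rightarrow> ('a \<Rightarrow> real) \<Rightarrow> real" where
  "dpair \<gamma> \<mu> f = (\<Sum>\<^sub>\<infinity>x\<in>{..\<gamma>}. \<mu> x * f x)"

definition unit_ball1 :: "'a::linorder \<Rightarrow> ('a \<Rightarrow> real) set" where
  "unit_ball1 \<gamma> = {\<mu> \<in> ell1 \<gamma>. l1norm \<gamma> \<mu> \<le> 1}"

definition wslice :: "'a::linorder \<Rightarrow> ('a \<Rightarrow> real) set \<Rightarrow> ('a \<Rightarrow> real) \<Rightarrow> real \<Rightarrow> ('a \<Rightarrow> real) set" where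
  "wslice \<gamma> S f t = {\<mu> \<in> S. dpair \<gamma> \<mu> f > t}"

text \<open>Norm diameter (extended-real valued, so it is meaningful for any set).\<close>
definition ndiam :: "'a::linorder \<Rightarrow> ('a \<Rightarrow> real) set \<Rightarrow> ereal" where
  "ndiam \<gamma> S = (SUP \<mu>\<in>S. SUP \<nu>\<in>S. ereal (l1norm \<gamma> (\<mu> - \<nu>)))"

definition szd :: "'a::linorder_topology \<Rightarrow> real \<Rightarrow> ('a \<Rightarrow> real) set \<Rightarrow> ('a \<Rightarrow> real) set" where
  "szd \<gamma> \<epsilon> K = K - \<Union> {wslice \<gamma> K f t | f t. f \<in> Cspace \<gamma> \<and> wslice \<gamma> K f t \<noteq> {}
                                   \<and> ndiam \<gamma> (wslice \<gamma> K f t) < ereal \<epsilon>}"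

text \<open>Transfinite iteration over a well-ordered index type (ordinals):
d^0 K = K, d^(b+1) K = d(d^b K), d^b K = intersection of d^m K (m < b) for limit b.\<close>
definition trans_iter :: "('s set \<Rightarrow> 's set) \<Rightarrow> 's set \<Rightarrow> 'i::wellorder \<Rightarrow> 's set" where
  "trans_iter D K = wfrec {(x, y). x < y} (\<lambda>F b.
     if \<forall>m. \<not> m < b then K
     else if \<exists>m. m < b \<and> (\<forall>n. n < b \<longrightarrow> n \<le> m)
       then D (F (THE m. m < b \<and> (\<forall>n. n < b \<longrightarrow> n \<le> m)))
     else (\<Inter>m\<in>{m. m < b}. F m))"

definition szd_iter :: "'a::linorder_topology \<Rightarrow> real \<Rightarrow> 'i::wellorder \<Rightarrow> ('a \<Rightarrow> real) set \<Rightarrow> ('a \<Rightarrow> real) set" where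
  "szd_iter \<gamma> \<epsilon> b K = trans_iter (szd \<gamma> \<epsilon>) K b"

definition fpt :: "'a \<Rightarrow> 'a \<Rightarrow> real" where
  "fpt \<beta> = (\<lambda>x. if x = \<beta> then 1 else 0)"

end

theory Submission
  imports Defs
begin

text \<open>For an ordinal \<open>c = \<omega>\<cdot>c' + n\<close> call a set \<open>F\<close> of \<open>2\<^sup>n\<close> nonzero multiples of
\<open>\<omega>\<^bsup>c'\<^esup>\<close> in \<open>[0,\<gamma>]\<close> admissible for \<open>c\<close>, and let \<open>P(b)\<close> consist of the uniform probability
measures on sets admissible for some \<open>c \<ge> b\<close>. Every weak*-slice through a point \<open>x\<close> of \<open>P(b)\<close>
contains, for each \<open>m < b\<close>, a point of \<open>P(m)\<close> at distance at least \<open>1/2\<close> from \<open>x\<close>: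
if \<open>n > 0\<close> take the uniform measure on the half of the support with the larger average of the
slicing function (distance 1); if \<open>n = 0\<close>, \<open>x\<close> is a point mass at a nonzero multiple \<open>p\<close> of
\<open>\<omega>\<^bsup>c'\<^esup>\<close>, which is a limit of multiples of \<open>\<omega>\<^bsup>m'\<^esup>\<close> for \<open>m = \<omega>\<cdot>m' + k\<close>, and by continuity
the uniform measure on \<open>2\<^sup>k\<close> of them close to \<open>p\<close> stays in the slice (distance 2). By
transfinite induction \<open>P(b)\<close> survives \<open>b\<close> Szlenk derivations, and the point mass at
\<open>\<omega>\<^bsup>\<omega>\<^sup>\<alpha>\<^esup>\<close> lies in \<open>P(\<omega>\<^bsup>1+\<alpha>\<^esup>)\<close>.\<close>

lemma less_multiset_if_greatest_difference:
  fixes M N :: "'a::linorder multiset"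
  assumes "count M y < count N y" "\<forall>z>y. count M z = count N z"
  shows "M < N"
  unfolding less_multiset\<^sub>H\<^sub>O
proof (intro conjI allI impI)
  show "M \<noteq> N" using assms(1) by auto
  fix z assume "count N z < count M z"
  with assms have "z < y" by (metis linorder_neqE order.asym)
  then show "\<exists>x>z. count M x < count N x" using assms(1) by blast
qed

lemma greatest_difference_if_less_multiset:
  fixes M N :: "'a::linorder multiset"
  assumes "M < N"
  obtains y where "count M y < count N y" "\<forall>z>y. count M z = count N z"
proof -
  define D where "D = {z. count M z \<noteq> count N z}"
  have fin: "finite D"
    by (rule finite_subset[of _ "set_mset M \<union> set_mset N"])
       (auto simp: D_def count_eq_zero_iff[symmetric])
  moreover have "D \<noteq> {}" using assms by (auto simp: D_def multiset_eq_iff[symmetric])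
  ultimately have yD: "Max D \<in> D" by (rule Max_in)
  have above: "\<forall>z>Max D. count M z = count N z"
    using Max_ge[OF fin] leD unfolding D_def by blast
  have "\<not> count N (Max D) < count M (Max D)"
    using assms above unfolding less_multiset\<^sub>H\<^sub>O by force
  with yD have "count M (Max D) < count N (Max D)" by (auto simp: D_def)
  then show thesis using above by (rule that)
qed

lemma exists_mset_between_above:
  fixes b p :: "'a::linorder multiset"
  assumes "b < p" "\<forall>e\<in>#p. s < e"
  obtains q where "b < q" "q < p" "\<forall>e\<in>#q. s \<le> e"
proof -
  obtain y where y: "count b y < count p y" "\<forall>z>y. count b z = count p z"
    using assms(1) by (rule greatest_difference_if_less_multiset)
  then have sy: "s < y" using assms(2) by (metis less_nat_zero_code not_in_iff)
  define A where "A = insert s {z \<in> set_mset b. z < y}"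
  define d where "d = Max A"
  have finA: "finite A" by (simp add: A_def)
  have dy: "d < y" and sd: "s \<le> d" and bd: "\<And>z. z \<in># b \<Longrightarrow> z < y \<Longrightarrow> z \<le> d"
    using finA Max_in[OF finA] sy by (auto simp: d_def A_def)
  \<comment> \<open>\<open>q\<close> agrees with \<open>p\<close> above \<open>y\<close>, has one copy of \<open>y\<close> less, and enough copies of \<open>d\<close> to exceed \<open>b\<close>.\<close>
  define q where "q = filter_mset (\<lambda>z. y < z) p + replicate_mset (count p y - 1) y
                      + replicate_mset (count b d + 1) d"
  have cq: "count q z = (if y < z then count p z else 0) + (if z = y then count p y - 1 else 0)
                         + (if z = d then count b d + 1 else 0)" for z
    unfolding q_def by simp
  have "q < p"
    by (rule less_multiset_if_greatest_difference[of _ y]) (use dy y(1) in \<open>auto simp: cq\<close>)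
  moreover have "b < q"
  proof (cases "count b y < count p y - 1")
    case True
    then show ?thesis
      by (intro less_multiset_if_greatest_difference[of _ y]) (use dy y in \<open>auto simp: cq\<close>)
  next
    case False
    have "count b z = count q z" if "d < z" for z
    proof (cases "z < y")
      case True
      with bd that have "z \<notin># b" by fastforce
      with True that show ?thesis by (auto simp: cq not_in_iff)
    next
      case False
      with that dy y \<open>\<not> count b y < count p y - 1\<close> show ?thesis by (auto simp: cq)
    qed
    then show ?thesis by (intro less_multiset_if_greatest_difference[of _ d]) (auto simp: cq)
  qed
  moreover have "s \<le> e" if "e \<in># q" for e
  proof -
    from that have "count q e \<noteq> 0" by simp
    then have "(y < e \<and> e \<in># p) \<or> e = y \<or> e = d"
      by (auto simp: cq split: if_splits simp del: count_eq_zero_iff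
               simp add: count_eq_zero_iff[symmetric])
    then show ?thesis using assms(2) sy sd by auto
  qed
  ultimately show thesis by (intro that) auto
qed

lemma infinite_mset_between_above:
  fixes b p :: "'a::linorder multiset"
  assumes "b < p" "\<forall>e\<in>#p. s < e"
  shows "infinite {q. b < q \<and> q < p \<and> (\<forall>e\<in>#q. s \<le> e)}" (is "infinite ?Q")
proof
  assume fin: "finite ?Q"
  obtain q0 where "q0 \<in> ?Q" using exists_mset_between_above[OF assms] by blast
  with fin have "Max ?Q \<in> ?Q" by (intro Max_in) auto
  then obtain q where q: "Max ?Q < q" "q < p" "\<forall>e\<in>#q. s \<le> e"
    using exists_mset_between_above[of "Max ?Q" p s] assms(2) by blast
  with \<open>Max ?Q \<in> ?Q\<close> have "q \<in> ?Q" by auto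
  with fin have "q \<le> Max ?Q" by simp
  with q(1) show False by simp
qed

text \<open>If \<open>M\<close> represents \<open>\<omega>\<cdot>c + n\<close>, then \<open>div_omega M\<close> represents \<open>c\<close> and \<open>count M 0 = n\<close>.\<close>

definition div_omega :: "nat multiset \<Rightarrow> nat multiset" where
  "div_omega M = image_mset (\<lambda>x. x - 1) (filter_mset (\<lambda>x. x \<noteq> 0) M)"

lemma count_div_omega [simp]: "count (div_omega M) y = count M (Suc y)"
  unfolding div_omega_def by (induction M) auto

lemma div_omega_add_mset_0 [simp]: "div_omega (add_mset 0 M) = div_omega M"
  by (simp add: div_omega_def)

lemma less_add_mset_0_iff: "m < add_mset 0 M \<longleftrightarrow> m \<le> M" for m M :: "nat multiset"
proof
  assume "m \<le> M"
  then show "m < add_mset 0 M" using le_multiset_right_total by (rule order.strict_trans1)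
next
  assume m: "m < add_mset 0 M"
  show "m \<le> M"
  proof (rule ccontr)
    assume "\<not> m \<le> M"
    then obtain y where y: "count M y < count m y" "\<forall>z>y. count M z = count m z"
      using greatest_difference_if_less_multiset by (metis leI)
    have "add_mset 0 M \<le> m"
    proof (cases "y = 0 \<and> count m 0 = Suc (count M 0)")
      case True
      then have "m = add_mset 0 M" by (intro multiset_eqI) (use y in \<open>auto simp: gr0_conv_Suc\<close>)
      then show ?thesis by simp
    next
      case False
      then have "add_mset 0 M < m"
        by (intro less_multiset_if_greatest_difference[of _ y]) (use y in auto)
      then show ?thesis by simp
    qed
    with m show False by simp
  qed
qed

lemma div_omega_strict_mono:
  fixes m b :: "nat multiset"
  assumes "m < b" "count b 0 = 0"
  shows "div_omega m < div_omega b"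
proof -
  obtain y where y: "count m y < count b y" "\<forall>z>y. count m z = count b z"
    using assms(1) by (rule greatest_difference_if_less_multiset)
  with assms(2) obtain y' where "y = Suc y'" by (metis less_nat_zero_code not0_implies_Suc)
  with y show ?thesis by (intro less_multiset_if_greatest_difference[of _ y']) auto
qed

lemma trans_iter_minimal:
  assumes "\<forall>m. \<not> m < (b::'i::wellorder)"
  shows "trans_iter D K b = K"
  unfolding trans_iter_def by (subst wfrec[OF wf]) (use assms in simp)

lemma trans_iter_succ:
  assumes "m < (b::'i::wellorder)" "\<forall>n. n < b \<longrightarrow> n \<le> m"
  shows "trans_iter D K b = D (trans_iter D K m)"
proof -
  have "(THE m. m < b \<and> (\<forall>n. n < b \<longrightarrow> n \<le> m)) = m"
    by (rule the_equality) (use assms in \<open>auto intro: order.antisym\<close>)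
  with assms show ?thesis
    unfolding trans_iter_def by (subst wfrec[OF wf]) (auto simp: cut_def)
qed

lemma trans_iter_limit:
  assumes "\<nexists>m. m < (b::'i::wellorder) \<and> (\<forall>n. n < b \<longrightarrow> n \<le> m)" "\<exists>m. m < b"
  shows "trans_iter D K b = (\<Inter>m\<in>{m. m < b}. trans_iter D K m)"
  unfolding trans_iter_def by (subst wfrec[OF wf]) (use assms in \<open>auto simp: cut_def\<close>)

lemma ndiam_ge:
  assumes "\<mu> \<in> S" "\<nu> \<in> S"
  shows "ereal (l1norm \<gamma> (\<mu> - \<nu>)) \<le> ndiam \<gamma> S"
  unfolding ndiam_def by (rule SUP_upper2[OF assms(1)]) (rule SUP_upper[OF assms(2)])

lemma subset_szd:
  assumes "P \<subseteq> K"
    and far: "\<And>x f t. x \<in> P \<Longrightarrow> f \<in> Cspace \<gamma> \<Longrightarrow> t < dpair \<gamma> x f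
                \<Longrightarrow> \<exists>y\<in>K. t < dpair \<gamma> y f \<and> \<epsilon> \<le> l1norm \<gamma> (y - x)"
  shows "P \<subseteq> szd \<gamma> \<epsilon> K"
proof
  fix x assume x: "x \<in> P"
  have "x \<notin> wslice \<gamma> K f t" if f: "f \<in> Cspace \<gamma>" and small: "ndiam \<gamma> (wslice \<gamma> K f t) < \<epsilon>" for f t
  proof
    assume xW: "x \<in> wslice \<gamma> K f t"
    then obtain y where "y \<in> K" "t < dpair \<gamma> y f" and far_y: "\<epsilon> \<le> l1norm \<gamma> (y - x)"
      using far[OF x f] by (auto simp: wslice_def)
    then have "y \<in> wslice \<gamma> K f t" by (simp add: wslice_def)
    from ndiam_ge[OF this xW] far_y have "ereal \<epsilon> \<le> ndiam \<gamma> (wslice \<gamma> K f t)"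
      by (meson ereal_less_eq(3) order_trans)
    with small show False by simp
  qed
  with x assms(1) show "x \<in> szd \<gamma> \<epsilon> K" unfolding szd_def by blast
qed

lemma subset_szd_iter:
  fixes P :: "'i::wellorder \<Rightarrow> ('a::linorder_topology \<Rightarrow> real) set"
  assumes "\<And>b. P b \<subseteq> K"
    and antimono: "\<And>b m. m < b \<Longrightarrow> P b \<subseteq> P m"
    and far: "\<And>b m x f t. m < b \<Longrightarrow> x \<in> P b \<Longrightarrow> f \<in> Cspace \<gamma> \<Longrightarrow> t < dpair \<gamma> x f
                \<Longrightarrow> \<exists>y\<in>P m. t < dpair \<gamma> y f \<and> \<epsilon> \<le> l1norm \<gamma> (y - x)"
  shows "P b \<subseteq> szd_iter \<gamma> \<epsilon> b K"
proof (induction b rule: less_induct)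
  case (less b)
  consider (minimal) "\<forall>m. \<not> m < b"
    | (succ) m where "m < b" "\<forall>n. n < b \<longrightarrow> n \<le> m"
    | (limit) "\<nexists>m. m < b \<and> (\<forall>n. n < b \<longrightarrow> n \<le> m)" "\<exists>m. m < b"
    by blast
  then show ?case
  proof cases
    case minimal
    then show ?thesis using assms(1) by (simp add: szd_iter_def trans_iter_minimal)
  next
    case succ
    have "P b \<subseteq> szd \<gamma> \<epsilon> (szd_iter \<gamma> \<epsilon> m K)"
    proof (rule subset_szd)
      show "P b \<subseteq> szd_iter \<gamma> \<epsilon> m K" using less.IH[OF succ(1)] antimono[OF succ(1)] by blast
    qed (use far[OF succ(1)] less.IH[OF succ(1)] in blast)
    then show ?thesis by (simp add: szd_iter_def trans_iter_succ[OF succ])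
  next
    case limit
    then show ?thesis using less.IH antimono unfolding szd_iter_def by (subst trans_iter_limit) blast+
  qed
qed

definition uniform_mass :: "'a set \<Rightarrow> 'a \<Rightarrow> real" where
  "uniform_mass F = (\<lambda>x. if x \<in> F then 1 / real (card F) else 0)"

lemma infsum_eq_sum_if_support_subset:
  assumes "finite A" "A \<subseteq> S" "\<And>x. x \<in> S - A \<Longrightarrow> g x = 0"
  shows "infsum g S = sum g A"
proof -
  have "infsum g S = infsum g A" by (rule infsum_cong_neutral) (use assms in auto)
  with assms(1) show ?thesis by simp
qed

lemma dpair_uniform_mass:
  assumes "finite F" "F \<subseteq> {..\<gamma>}"
  shows "dpair \<gamma> (uniform_mass F) f = sum f F / real (card F)"
proof -
  have "dpair \<gamma> (uniform_mass F) f = (\<Sum>x\<in>F. f x / real (card F))"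
    unfolding dpair_def
    by (subst infsum_eq_sum_if_support_subset[OF assms]) (auto simp: uniform_mass_def)
  then show ?thesis by (simp add: sum_divide_distrib)
qed

lemma uniform_mass_in_unit_ball1:
  assumes "finite F" "F \<noteq> {}" "F \<subseteq> {..\<gamma>}"
  shows "uniform_mass F \<in> unit_ball1 \<gamma>"
proof -
  have "(\<lambda>x. \<bar>uniform_mass F x\<bar>) summable_on {..\<gamma>} \<longleftrightarrow> (\<lambda>x. \<bar>uniform_mass F x\<bar>) summable_on F"
    by (rule summable_on_cong_neutral) (use assms in \<open>auto simp: uniform_mass_def\<close>)
  moreover have "l1norm \<gamma> (uniform_mass F) = (\<Sum>x\<in>F. 1 / real (card F))"
    unfolding l1norm_def
    by (subst infsum_eq_sum_if_support_subset[OF assms(1,3)]) (auto simp: uniform_mass_def)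
  ultimately show ?thesis
    using assms by (auto simp: unit_ball1_def ell1_def uniform_mass_def)
qed

lemma l1norm_uniform_mass_diff_half:
  assumes "finite F" "G \<subseteq> F" "card F = 2 * card G" "G \<noteq> {}" "F \<subseteq> {..\<gamma>}"
  shows "l1norm \<gamma> (uniform_mass G - uniform_mass F) = 1"
proof -
  have "card G > 0" using assms(1,2,4) by (simp add: card_gt_0_iff finite_subset)
  have "l1norm \<gamma> (uniform_mass G - uniform_mass F) = (\<Sum>x\<in>F. \<bar>(uniform_mass G - uniform_mass F) x\<bar>)"
    unfolding l1norm_def
    by (rule infsum_eq_sum_if_support_subset[OF assms(1,5)]) (use assms(2) in \<open>auto simp: uniform_mass_def\<close>)
  also have "\<dots> = (\<Sum>x\<in>F. 1 / real (card F))"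
    using assms(2,3) \<open>card G > 0\<close> by (intro sum.cong) (auto simp: uniform_mass_def field_simps)
  also have "\<dots> = 1" using assms \<open>card G > 0\<close> by simp
  finally show ?thesis .
qed

lemma l1norm_uniform_mass_diff_disjoint:
  assumes "finite F" "finite G" "F \<inter> G = {}" "F \<noteq> {}" "G \<noteq> {}" "F \<union> G \<subseteq> {..\<gamma>}"
  shows "l1norm \<gamma> (uniform_mass G - uniform_mass F) = 2"
proof -
  let ?d = "\<lambda>x. \<bar>(uniform_mass G - uniform_mass F) x\<bar>"
  have "l1norm \<gamma> (uniform_mass G - uniform_mass F) = sum ?d (G \<union> F)"
    unfolding l1norm_def
    by (rule infsum_eq_sum_if_support_subset) (use assms in \<open>auto simp: uniform_mass_def\<close>)
  also have "\<dots> = sum ?d G + sum ?d F" using assms(1-3) by (intro sum.union_disjoint) auto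
  also have "sum ?d G = (\<Sum>x\<in>G. 1 / real (card G))"
    using assms(3) by (intro sum.cong) (auto simp: uniform_mass_def)
  also have "sum ?d F = (\<Sum>x\<in>F. 1 / real (card F))"
    using assms(3) by (intro sum.cong) (auto simp: uniform_mass_def)
  also have "(\<Sum>x\<in>G. 1 / real (card G)) + (\<Sum>x\<in>F. 1 / real (card F)) = 2"
    using assms by simp
  finally show ?thesis .
qed

lemma obtain_half_subset_sum_ge:
  fixes f :: "'a \<Rightarrow> real"
  assumes "finite F" "card F = 2 * n"
  obtains G where "G \<subseteq> F" "card G = n" "sum f F / 2 \<le> sum f G"
proof -
  obtain G1 where G1: "G1 \<subseteq> F" "card G1 = n"
    using obtain_subset_with_card_n[of n F] assms(2) by auto
  have G2: "F - G1 \<subseteq> F" "card (F - G1) = n"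
    using assms card_Diff_subset[of G1 F] G1 finite_subset by auto
  have "sum f F = sum f (F - G1) + sum f G1" using sum.subset_diff[OF G1(1) assms(1)] .
  then show thesis using that[OF G1] that[OF G2] by argo
qed

lemma continuous_on_gt_on_left_interval:
  fixes f :: "'a::linorder_topology \<Rightarrow> real"
  assumes "continuous_on {..\<gamma>} f" "p \<le> \<gamma>" "t < f p" "y < p"
  obtains a where "a < p" "\<forall>q. a < q \<and> q \<le> p \<longrightarrow> t < f q"
proof -
  obtain A where A: "open A" "A \<inter> {..\<gamma>} = f -` {t<..} \<inter> {..\<gamma>}"
    using assms(1) open_greaterThan[of t] unfolding continuous_on_open_invariant by blast
  with assms(2,3) have "p \<in> A" by blast
  then obtain a where a: "a < p" "{a<..p} \<subseteq> A" using open_left[OF A(1) _ assms(4)] by blast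
  have "t < f q" if "a < q" "q \<le> p" for q
  proof -
    from that a(2) assms(2) have "q \<in> A \<inter> {..\<gamma>}" by auto
    with A(2) show ?thesis by auto
  qed
  with a(1) show thesis by (intro that) auto
qed

text \<open>\<open>F\<close> is admissible for \<open>c = \<omega>\<cdot>c' + n\<close> if it consists of \<open>2\<^sup>n\<close> nonzero multiples of
\<open>\<omega>\<^bsup>c'\<^esup>\<close> in \<open>[0,\<gamma>]\<close>; \<open>q\<close> is a multiple of \<open>\<omega>\<^bsup>c'\<^esup>\<close> iff all its exponents are at least \<open>c'\<close>.\<close>

definition admissible :: "nat multiset multiset \<Rightarrow> nat multiset \<Rightarrow> nat multiset multiset set \<Rightarrow> bool" where
  "admissible \<gamma> c F \<longleftrightarrow> finite F \<and> card F = 2 ^ count c 0 \<and>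
     (\<forall>q\<in>F. q \<le> \<gamma> \<and> q \<noteq> {#} \<and> (\<forall>e\<in>#q. div_omega c \<le> e))"

definition witnesses :: "nat multiset multiset \<Rightarrow> nat multiset \<Rightarrow> (nat multiset multiset \<Rightarrow> real) set" where
  "witnesses \<gamma> b = {uniform_mass F | F c. b \<le> c \<and> admissible \<gamma> c F}"

lemma admissible_support:
  assumes "admissible \<gamma> c F"
  shows "finite F" "F \<noteq> {}" "F \<subseteq> {..\<gamma>}"
  using assms by (auto simp: admissible_def)

lemma uniform_mass_in_witnesses: "admissible \<gamma> c F \<Longrightarrow> m \<le> c \<Longrightarrow> uniform_mass F \<in> witnesses \<gamma> m"
  unfolding witnesses_def by blast

lemma witnesses_subset_unit_ball1: "witnesses \<gamma> b \<subseteq> unit_ball1 \<gamma>"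
proof
  fix x assume "x \<in> witnesses \<gamma> b"
  then obtain F c where "x = uniform_mass F" "admissible \<gamma> c F" unfolding witnesses_def by blast
  then show "x \<in> unit_ball1 \<gamma>" using admissible_support uniform_mass_in_unit_ball1 by metis
qed

lemma witnesses_antimono: "m \<le> b \<Longrightarrow> witnesses \<gamma> b \<subseteq> witnesses \<gamma> m"
  unfolding witnesses_def by (blast intro: order.trans)

lemma admissible_halve:
  fixes f :: "nat multiset multiset \<Rightarrow> real"
  assumes "admissible \<gamma> (add_mset 0 c) F"
  obtains G where "admissible \<gamma> c G" "G \<subseteq> F" "card F = 2 * card G" "sum f F / 2 \<le> sum f G"
proof -
  have F: "finite F" "card F = 2 * 2 ^ count c 0" using assms by (auto simp: admissible_def)
  obtain G where G: "G \<subseteq> F" "card G = 2 ^ count c 0" "sum f F / 2 \<le> sum f G"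
    using obtain_half_subset_sum_ge[OF F] .
  with assms F(1) have "admissible \<gamma> c G" by (auto simp: admissible_def intro: finite_subset)
  with G F(2) show thesis by (intro that) auto
qed

lemma admissible_near_point:
  fixes f :: "nat multiset multiset \<Rightarrow> real"
  assumes "admissible \<gamma> c {p}" "count c 0 = 0" "m < c" "continuous_on {..\<gamma>} f" "t < f p"
  obtains G where "admissible \<gamma> m G" "p \<notin> G" "\<forall>q\<in>G. t < f q"
proof -
  have p: "p \<le> \<gamma>" "p \<noteq> {#}" "\<forall>e\<in>#p. div_omega c \<le> e" using assms(1) by (auto simp: admissible_def)
  have above: "\<forall>e\<in>#p. div_omega m < e"
    using div_omega_strict_mono[OF assms(3,2)] p(3) order.strict_trans2 by blast
  obtain a where a: "a < p" "\<forall>q. a < q \<and> q \<le> p \<longrightarrow> t < f q"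
    using continuous_on_gt_on_left_interval[OF assms(4) p(1) assms(5), of "{#}"] p(2) by auto
  obtain G where G: "finite G" "card G = 2 ^ count m 0"
    "G \<subseteq> {q. a < q \<and> q < p \<and> (\<forall>e\<in>#q. div_omega m \<le> e)}"
    using infinite_arbitrarily_large[OF infinite_mset_between_above[OF a(1) above]] by blast
  have "q \<le> \<gamma> \<and> q \<noteq> {#} \<and> (\<forall>e\<in>#q. div_omega m \<le> e)" if "q \<in> G" for q
  proof -
    from that G(3) have "a < q" "q < p" "\<forall>e\<in>#q. div_omega m \<le> e" by auto
    with p(1) show ?thesis by auto
  qed
  with G(1,2) have "admissible \<gamma> m G" by (simp add: admissible_def)
  with G(3) a(2) show thesis by (intro that) auto
qed

lemma witnesses_step_succ:
  assumes F: "admissible \<gamma> (add_mset 0 c) F" and "m \<le> c" "t < dpair \<gamma> (uniform_mass F) f"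
  shows "\<exists>y\<in>witnesses \<gamma> m. t < dpair \<gamma> y f \<and> l1norm \<gamma> (y - uniform_mass F) = 1"
proof -
  obtain G where G: "admissible \<gamma> c G" "G \<subseteq> F" "card F = 2 * card G" "sum f F / 2 \<le> sum f G"
    using F by (rule admissible_halve)
  note F' = admissible_support[OF F] and G' = admissible_support[OF G(1)]
  have "dpair \<gamma> (uniform_mass F) f = (sum f F / 2) / real (card G)"
    using dpair_uniform_mass[OF F'(1,3)] G(3) by (simp add: divide_divide_eq_left)
  also have "\<dots> \<le> sum f G / real (card G)" using G(4) by (rule divide_right_mono) simp
  also have "\<dots> = dpair \<gamma> (uniform_mass G) f" using dpair_uniform_mass[OF G'(1,3)] by simp
  finally have "t < dpair \<gamma> (uniform_mass G) f" using assms(3) by simp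
  moreover have "l1norm \<gamma> (uniform_mass G - uniform_mass F) = 1"
    using l1norm_uniform_mass_diff_half F' G G' by blast
  ultimately show ?thesis using uniform_mass_in_witnesses[OF G(1) assms(2)] by blast
qed

lemma witnesses_step_limit:
  assumes F: "admissible \<gamma> c F" and "count c 0 = 0" "m < c" "f \<in> Cspace \<gamma>"
    and "t < dpair \<gamma> (uniform_mass F) f"
  shows "\<exists>y\<in>witnesses \<gamma> m. t < dpair \<gamma> y f \<and> l1norm \<gamma> (y - uniform_mass F) = 2"
proof -
  have "card F = 1" using F assms(2) by (simp add: admissible_def)
  then obtain p where p: "F = {p}" by (rule card_1_singletonE)
  have "t < f p" using dpair_uniform_mass[OF admissible_support(1,3)[OF F]] assms(5) p by simp
  with F p assms(2-4) obtain G where G: "admissible \<gamma> m G" "p \<notin> G" "\<forall>q\<in>G. t < f q"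
    unfolding Cspace_def by (auto elim: admissible_near_point)
  note F' = admissible_support[OF F] and G' = admissible_support[OF G(1)]
  have "(\<Sum>q\<in>G. t) < sum f G" using G(3) G'(1,2) by (intro sum_strict_mono) auto
  moreover have "card G > 0" using G'(1,2) by (simp add: card_gt_0_iff)
  ultimately have "t < sum f G / real (card G)" by (simp add: pos_less_divide_eq mult.commute)
  then have "t < dpair \<gamma> (uniform_mass G) f" using dpair_uniform_mass[OF G'(1,3)] by simp
  moreover have "l1norm \<gamma> (uniform_mass G - uniform_mass F) = 2"
    using G(2) p by (intro l1norm_uniform_mass_diff_disjoint) (use F' G' in auto)
  ultimately show ?thesis using uniform_mass_in_witnesses[OF G(1) order.refl] by blast
qed

lemma witnesses_step:
  assumes "m < b" "x \<in> witnesses \<gamma> b" "f \<in> Cspace \<gamma>" "t < dpair \<gamma> x f"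
  shows "\<exists>y\<in>witnesses \<gamma> m. t < dpair \<gamma> y f \<and> 1/2 \<le> l1norm \<gamma> (y - x)"
proof -
  obtain F c where x: "x = uniform_mass F" and "b \<le> c" and F: "admissible \<gamma> c F"
    using assms(2) unfolding witnesses_def by blast
  with assms(1) have "m < c" by simp
  show ?thesis
  proof (cases "count c 0")
    case 0
    then show ?thesis using witnesses_step_limit[OF F _ \<open>m < c\<close> assms(3)] assms(4) x by fastforce
  next
    case (Suc k)
    then have "c = add_mset 0 (c - {#0#})" by (simp add: insert_DiffM count_greater_zero_iff[symmetric])
    with \<open>m < c\<close> F show ?thesis
      using witnesses_step_succ[of \<gamma> "c - {#0#}" F m] assms(4) x less_add_mset_0_iff by fastforce
  qed
qed

theorem mainTheorem10:
  fixes \<alpha> :: nat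
  shows "fpt (opow (opow \<alpha>)) \<in>
           szd_iter (opow (opow \<alpha>) :: nat multiset multiset) (1/2)
                    (opow (1 + \<alpha>) :: nat multiset)
                    (unit_ball1 (opow (opow \<alpha>) :: nat multiset multiset))"
proof -
  define \<gamma> where "\<gamma> = (opow (opow \<alpha>) :: nat multiset multiset)"
  have "div_omega {#Suc \<alpha>#} = {#\<alpha>#}" by (rule multiset_eqI) simp
  then have "admissible \<gamma> (opow (1 + \<alpha>)) {\<gamma>}" by (simp add: admissible_def \<gamma>_def opow_def)
  then have "uniform_mass {\<gamma>} \<in> witnesses \<gamma> (opow (1 + \<alpha>))" by (rule uniform_mass_in_witnesses) simp
  moreover have "uniform_mass {\<gamma>} = fpt \<gamma>" by (auto simp: uniform_mass_def fpt_def)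
  moreover have "witnesses \<gamma> b \<subseteq> szd_iter \<gamma> (1/2) b (unit_ball1 \<gamma>)" for b
    using witnesses_subset_unit_ball1 witnesses_antimono[OF less_imp_le] witnesses_step
    by (rule subset_szd_iter)
  ultimately show ?thesis unfolding \<gamma>_def by auto
qed

end
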